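(* Let $B(x)=\sum_{i=0}^d b_ix^i\in\mathbb{R}[x]$ have degree $d\ge1$ with $b_0\neq0$, and for $\ell\ge1$ let $B_1,\dots,B_\ell\in\mathbb{R}^{\ell+d}$ be the rows of the $\ell\times(\ell+d)$ matrix whose $k$-th row has entries $b_0,b_1,\dots,b_d$ in columns $k,k+1,\dots,k+d$ and zeros elsewhere. Then for every $M>M(B)^2$ there is a constant $K(M)$, independent of $\ell$, such that \[ \det\big(\langle B_i,B_j\rangle\big)_{1\le i,j\le\ell}\ \le\ K(M)\,M^{\ell}\qquad\text{for all }\ell\ge1. \]
   Context: $\langle\cdot,\cdot\rangle$ is the standard inner product. For $P(x)=c_d\prod_{i=1}^d(x-\alpha_i)\in\mathbb{C}[x]$ with $c_d\ne0$, the Mahler measure is $M(P)=|c_d|\prod_{i=1}^d\max\{1,|\alpha_i|\}$. *)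

theory Defs
  imports "Berlekamp_Zassenhaus.Mahler_Measure" "Jordan_Normal_Form.Determinant"
begin

text \<open>The k-th row (0-indexed, k < l) of the l x (l+d) banded matrix built from
  the coefficients b_0..b_d of B: entry in column j is b_(j-k) if k \<le> j \<le> k+d, else 0.\<close>
definition band_row :: "real poly \<Rightarrow> nat \<Rightarrow> nat \<Rightarrow> real vec" where
  "band_row B l k = vec (l + degree B)
     (\<lambda>j. if k \<le> j \<and> j \<le> k + degree B then coeff B (j - k) else 0)"

definition band_gram :: "real poly \<Rightarrow> nat \<Rightarrow> real mat" where
  "band_gram B l = mat l l (\<lambda>(i, j). band_row B l i \<bullet> band_row B l j)"

end

theory Submission
  imports Defs "HOL-Analysis.Convex"
begin

text \<open>
  Over the complex numbers write \<open>B = c (x - a_1) ... (x - a_d)\<close>. The matrix with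
  rows \<open>B_1, ..., B_l\<close> is the convolution matrix \<open>T_l(B)\<close> of size \<open>l \<times> (l + d)\<close>, and
  convolution matrices are multiplicative: \<open>T_n(P Q) = T_n(P) T_(n + deg P)(Q)\<close>. By
  Cauchy-Binet, the Gram determinant \<open>det (X X^*)\<close> of an \<open>n \<times> m\<close> matrix \<open>X\<close> is the sum of the
  squared moduli of its maximal minors, and right multiplication by a matrix \<open>Y\<close> multiplies
  this sum by at most the squared-minor mass of \<open>Y\<close> (Cauchy-Binet plus Cauchy-Schwarz). For the
  bidiagonal matrix \<open>Y = T_N(x - a)\<close> every maximal minor has at most one nonzero term, hence
  modulus at most \<open>max 1 |a| ^ n\<close>, so peeling off one linear factor costs a factor
  \<open>max 1 |a| ^ (2 n)\<close> times two binomial coefficients. Induction over the roots gives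
  \<open>det (band_gram B l) \<le> (l + d + 1) ^ (4 d^2) * M(B) ^ (2 l)\<close>, and since
  \<open>(l + d + 1) ^ (4 d^2) * (M(B)^2 / M) ^ l\<close> is bounded when \<open>M > M(B)^2\<close>, the theorem follows.
\<close>

section \<open>Cauchy-Binet over index maps\<close>

text \<open>Maps sending \<open>{0..<n}\<close> into \<open>{0..<m}\<close> and fixing all other numbers; they index the
  (possibly repeating) choices of \<open>n\<close> among \<open>m\<close> rows or columns.\<close>
definition index_maps :: "nat \<Rightarrow> nat \<Rightarrow> (nat \<Rightarrow> nat) set" where
  "index_maps n m = {f. (\<forall>i\<in>{0..<n}. f i \<in> {0..<m}) \<and> (\<forall>i. i \<notin> {0..<n} \<longrightarrow> f i = i)}"

lemma finite_index_maps: "finite (index_maps n m)"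
  unfolding index_maps_def by (rule finite_bounded_functions, auto)

lemma index_maps_lt: "f \<in> index_maps n m \<Longrightarrow> i < n \<Longrightarrow> f i < m"
  unfolding index_maps_def by auto

definition minor :: "nat \<Rightarrow> 'a mat \<Rightarrow> (nat \<Rightarrow> nat) \<Rightarrow> (nat \<Rightarrow> nat) \<Rightarrow> 'a mat" where
  "minor n Y g f = mat n n (\<lambda>(i, j). Y $$ (g i, f j))"

lemma minor_carrier: "minor n Y g f \<in> carrier_mat n n"
  unfolding minor_def by auto

text \<open>Multilinearity of the determinant in the rows of \<open>A * B\<close>.\<close>
lemma det_mult_expand:
  fixes A B :: "'a::comm_ring_1 mat"
  assumes A: "A \<in> carrier_mat n m" and B: "B \<in> carrier_mat m n"
  shows "det (A * B) = (\<Sum>f\<in>index_maps n m. (\<Prod>i=0..<n. A $$ (i, f i)) * det (minor n B f id))"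
proof -
  have "det (A * B) = (\<Sum>f\<in>index_maps n m. det (mat\<^sub>r n n (\<lambda>i. A $$ (i, f i) \<cdot>\<^sub>v row B (f i))))"
    unfolding mat_mul_finsum_alt[OF A B] index_maps_def
    by (rule det_linear_rows_sum, insert A B, auto)
  also have "\<dots> = (\<Sum>f\<in>index_maps n m. (\<Prod>i=0..<n. A $$ (i, f i)) * det (minor n B f id))"
  proof (rule sum.cong[OF refl])
    fix f assume f: "f \<in> index_maps n m"
    have "mat\<^sub>r n n (\<lambda>i. row B (f i)) = minor n B f id"
      using f B unfolding index_maps_def minor_def by (intro eq_matI, auto)
    moreover have "det (mat\<^sub>r n n (\<lambda>i. A $$ (i, f i) \<cdot>\<^sub>v row B (f i))) =
        (\<Prod>i=0..<n. A $$ (i, f i)) * det (mat\<^sub>r n n (\<lambda>i. row B (f i)))"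
      by (rule det_rows_mul, insert B, auto)
    ultimately show "det (mat\<^sub>r n n (\<lambda>i. A $$ (i, f i) \<cdot>\<^sub>v row B (f i))) =
        (\<Prod>i=0..<n. A $$ (i, f i)) * det (minor n B f id)" by simp
  qed
  finally show ?thesis .
qed

lemma index_maps_permute_bij:
  assumes p: "p permutes {0..<n}"
  shows "bij_betw (\<lambda>g. g \<circ> Hilbert_Choice.inv p) (index_maps n m) (index_maps n m)"
proof (rule bij_betwI[where g = "\<lambda>g. g \<circ> p"])
  have q: "Hilbert_Choice.inv p permutes {0..<n}" using permutes_inv[OF p] .
  show "(\<lambda>g. g \<circ> Hilbert_Choice.inv p) \<in> index_maps n m \<rightarrow> index_maps n m"
    using q unfolding index_maps_def by (auto simp: permutes_in_image permutes_not_in)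
  show "(\<lambda>g. g \<circ> p) \<in> index_maps n m \<rightarrow> index_maps n m"
    using p unfolding index_maps_def by (auto simp: permutes_in_image permutes_not_in)
  show "g \<circ> Hilbert_Choice.inv p \<circ> p = g" "g \<circ> p \<circ> Hilbert_Choice.inv p = g" for g
    using permutes_inverses[OF p] by (auto simp: o_def)
qed

text \<open>One summand of the permutation expansion of \<open>det (minor n A id f)\<close>, summed over all
  \<open>f\<close>, reproduces \<open>det (A * B)\<close>: reindex by \<open>f = g \<circ> inv p\<close> and absorb the sign.\<close>
lemma cauchy_binet_permutation_term:
  fixes A B :: "'a::comm_ring_1 mat"
  assumes A: "A \<in> carrier_mat n m" and B: "B \<in> carrier_mat m n" and p: "p permutes {0..<n}"
  shows "(\<Sum>f\<in>index_maps n m. signof p * (\<Prod>i=0..<n. A $$ (i, f (p i))) * det (minor n B f id))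
    = det (A * B)"
proof -
  let ?q = "Hilbert_Choice.inv p"
  have q: "?q permutes {0..<n}" using permutes_inv[OF p] .
  have sign: "det (minor n B (g \<circ> ?q) id) = signof p * det (minor n B g id)" for g
  proof -
    have "minor n B (g \<circ> ?q) id = mat n n (\<lambda>(i,j). minor n B g id $$ (?q i, j))"
      using q unfolding minor_def by (intro eq_matI, auto simp: permutes_in_image)
    also have "det \<dots> = signof ?q * det (minor n B g id)"
      by (rule det_permute_rows[OF _ q], auto simp: minor_def)
    also have "signof ?q = (signof p :: 'a)" by (rule signof_inv[OF _ p], auto)
    finally show ?thesis .
  qed
  have "(\<Sum>f\<in>index_maps n m. signof p * (\<Prod>i=0..<n. A $$ (i, f (p i))) * det (minor n B f id))
    = (\<Sum>g\<in>index_maps n m. signof p * (\<Prod>i=0..<n. A $$ (i, (g \<circ> ?q) (p i)))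
        * det (minor n B (g \<circ> ?q) id))"
    by (rule sum.reindex_bij_betw[OF index_maps_permute_bij[OF p], symmetric])
  also have "\<dots> = (\<Sum>g\<in>index_maps n m. (\<Prod>i=0..<n. A $$ (i, g i)) * det (minor n B g id))"
  proof (rule sum.cong[OF refl])
    fix g
    have "signof p * signof p = (1::'a)" by (simp add: sign_def)
    then show "signof p * (\<Prod>i=0..<n. A $$ (i, (g \<circ> ?q) (p i))) * det (minor n B (g \<circ> ?q) id)
      = (\<Prod>i=0..<n. A $$ (i, g i)) * det (minor n B g id)"
      unfolding sign using permutes_inverses[OF p]
      by (simp add: o_def, metis (no_types, lifting) mult.assoc mult.left_commute mult_1)
  qed
  also have "\<dots> = det (A * B)" using det_mult_expand[OF A B] by simp
  finally show ?thesis .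
qed

text \<open>Cauchy-Binet, summed over all index maps rather than increasing ones: every
  \<open>n\<close>-subset of columns arises from \<open>n!\<close> maps, and non-injective maps contribute zero.\<close>
theorem cauchy_binet_index_maps:
  fixes A B :: "'a::comm_ring_1 mat"
  assumes A: "A \<in> carrier_mat n m" and B: "B \<in> carrier_mat m n"
  shows "of_nat (fact n) * det (A * B) =
    (\<Sum>f\<in>index_maps n m. det (minor n A id f) * det (minor n B f id))"
proof -
  let ?P = "{p. p permutes {0..<n}}"
  have det_A: "det (minor n A id f) = (\<Sum>p\<in>?P. signof p * (\<Prod>i=0..<n. A $$ (i, f (p i))))" for f
    unfolding minor_def by (subst det_def', auto intro!: sum.cong prod.cong)
  have "(\<Sum>f\<in>index_maps n m. det (minor n A id f) * det (minor n B f id))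
     = (\<Sum>p\<in>?P. \<Sum>f\<in>index_maps n m. signof p * (\<Prod>i=0..<n. A $$ (i, f (p i))) * det (minor n B f id))"
    unfolding det_A sum_distrib_right by (rule sum.swap)
  also have "\<dots> = (\<Sum>p\<in>?P. det (A * B))"
    using cauchy_binet_permutation_term[OF A B] by simp
  also have "\<dots> = of_nat (fact n) * det (A * B)"
    using card_permutations[of "{0..<n}" n] by simp
  finally show ?thesis by simp
qed

section \<open>Gram determinants as sums of squared minors\<close>

text \<open>Complex conjugation is a ring homomorphism, so it commutes with determinants.\<close>
interpretation cnj_hom: comm_ring_hom cnj
  by (unfold_locales, auto)

definition conj_transpose :: "complex mat \<Rightarrow> complex mat" where
  "conj_transpose X = mat (dim_col X) (dim_row X) (\<lambda>(i, j). cnj (X $$ (j, i)))"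

text \<open>Sum of the squared moduli of the \<open>n \<times> n\<close> column minors of \<open>X\<close>, indexed by
  \<open>index_maps n m\<close> (so each genuine maximal minor is counted \<open>n!\<close> times).\<close>
definition minor_sq_sum :: "nat \<Rightarrow> nat \<Rightarrow> complex mat \<Rightarrow> real" where
  "minor_sq_sum n m X = (\<Sum>f\<in>index_maps n m. (cmod (det (minor n X id f)))\<^sup>2)"

lemma minor_sq_sum_nonneg: "0 \<le> minor_sq_sum n m X"
  unfolding minor_sq_sum_def by (intro sum_nonneg, auto)

lemma gram_det_minor_sq_sum:
  assumes X: "X \<in> carrier_mat n m"
  shows "of_nat (fact n) * det (X * conj_transpose X) = complex_of_real (minor_sq_sum n m X)"
proof -
  have H: "conj_transpose X \<in> carrier_mat m n" using X unfolding conj_transpose_def by auto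
  have "det (minor n (conj_transpose X) f id) = cnj (det (minor n X id f))"
    if f: "f \<in> index_maps n m" for f
  proof -
    have "minor n (conj_transpose X) f id = transpose_mat (map_mat cnj (minor n X id f))"
      using f X unfolding conj_transpose_def minor_def index_maps_def by (intro eq_matI, auto)
    then show ?thesis by (simp add: det_transpose[of _ n] minor_def)
  qed
  then have "of_nat (fact n) * det (X * conj_transpose X) =
      (\<Sum>f\<in>index_maps n m. det (minor n X id f) * cnj (det (minor n X id f)))"
    unfolding cauchy_binet_index_maps[OF X H] by (intro sum.cong, auto)
  also have "\<dots> = complex_of_real (minor_sq_sum n m X)"
    unfolding minor_sq_sum_def of_real_sum complex_norm_square ..
  finally show ?thesis .
qed

lemma minor_mult_cauchy_binet:
  assumes X: "X \<in> carrier_mat n m" and Y: "Y \<in> carrier_mat m p" and f: "f \<in> index_maps n p"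
  shows "of_nat (fact n) * det (minor n (X * Y) id f) =
    (\<Sum>g\<in>index_maps n m. det (minor n X id g) * det (minor n Y g f))"
proof -
  let ?Yf = "mat m n (\<lambda>(i, j). Y $$ (i, f j))"
  have "minor n (X * Y) id f = X * ?Yf"
    using X Y f unfolding minor_def index_maps_def by (intro eq_matI, auto simp: scalar_prod_def)
  moreover have "minor n ?Yf g id = minor n Y g f" if "g \<in> index_maps n m" for g
    using that f unfolding minor_def index_maps_def by (intro eq_matI, auto)
  ultimately show ?thesis
    using cauchy_binet_index_maps[OF X, of ?Yf] by auto
qed

text \<open>Right multiplication by \<open>Y\<close> multiplies the squared-minor sum by at most the total
  squared-minor mass of \<open>Y\<close> (Cauchy-Binet followed by Cauchy-Schwarz).\<close>
lemma minor_sq_sum_mult_le: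
  assumes X: "X \<in> carrier_mat n m" and Y: "Y \<in> carrier_mat m p"
  shows "(fact n)\<^sup>2 * minor_sq_sum n p (X * Y) \<le> minor_sq_sum n m X *
     (\<Sum>f\<in>index_maps n p. \<Sum>g\<in>index_maps n m. (cmod (det (minor n Y g f)))\<^sup>2)"
proof -
  let ?x = "\<lambda>g. cmod (det (minor n X id g))" and ?y = "\<lambda>g f. cmod (det (minor n Y g f))"
  have "(fact n * cmod (det (minor n (X * Y) id f)))\<^sup>2 \<le>
      minor_sq_sum n m X * (\<Sum>g\<in>index_maps n m. (?y g f)\<^sup>2)"
    if f: "f \<in> index_maps n p" for f
  proof -
    have "fact n * cmod (det (minor n (X * Y) id f)) = cmod (of_nat (fact n) * det (minor n (X * Y) id f))"
      by (simp add: norm_mult)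
    also have "\<dots> \<le> (\<Sum>g\<in>index_maps n m. ?x g * ?y g f)"
      unfolding minor_mult_cauchy_binet[OF X Y f] by (rule order.trans[OF norm_sum], simp add: norm_mult)
    finally have "(fact n * cmod (det (minor n (X * Y) id f)))\<^sup>2 \<le> (\<Sum>g\<in>index_maps n m. ?x g * ?y g f)\<^sup>2"
      by (intro power_mono, auto)
    also have "\<dots> \<le> (\<Sum>g\<in>index_maps n m. (?x g)\<^sup>2) * (\<Sum>g\<in>index_maps n m. (?y g f)\<^sup>2)"
      by (rule Cauchy_Schwarz_ineq_sum)
    finally show ?thesis unfolding minor_sq_sum_def .
  qed
  then have "(\<Sum>f\<in>index_maps n p. (fact n * cmod (det (minor n (X * Y) id f)))\<^sup>2) \<le>
      (\<Sum>f\<in>index_maps n p. minor_sq_sum n m X * (\<Sum>g\<in>index_maps n m. (?y g f)\<^sup>2))"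
    by (rule sum_mono)
  then show ?thesis
    unfolding minor_sq_sum_def[of n p] by (simp add: sum_distrib_left power_mult_distrib)
qed


section \<open>Maximal minors of bidiagonal matrices\<close>

definition bidiagonal :: "nat \<Rightarrow> nat \<Rightarrow> complex mat \<Rightarrow> bool" where
  "bidiagonal m p Y \<longleftrightarrow> (\<forall>r<m. \<forall>c<p. c \<noteq> r \<and> c \<noteq> Suc r \<longrightarrow> Y $$ (r, c) = 0)"

text \<open>The permutations \<open>s\<close> that match every row \<open>g i\<close> of a minor with a column
  \<open>f (s i) \<in> {g i, g i + 1}\<close>: the only terms of the permutation expansion of a bidiagonal
  minor that can be nonzero.\<close>
definition bidiagonal_matchings :: "nat \<Rightarrow> (nat \<Rightarrow> nat) \<Rightarrow> (nat \<Rightarrow> nat) \<Rightarrow> (nat \<Rightarrow> nat) set" where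
  "bidiagonal_matchings n g f =
    {s. s permutes {0..<n} \<and> (\<forall>i<n. f (s i) = g i \<or> f (s i) = Suc (g i))}"

text \<open>Helper for the uniqueness of matchings: if \<open>s\<close> and \<open>t\<close> differ and \<open>i\<close> is a mismatch
  with minimal \<open>g i\<close>, then \<open>s\<close> cannot take the diagonal entry at \<open>i\<close>, because the row
  \<open>j\<close> with \<open>t j = s i\<close> would be either \<open>i\<close> itself or a mismatch with smaller \<open>g j\<close>.\<close>
lemma bidiagonal_matching_unique_aux:
  fixes n :: nat
  assumes g: "inj_on g {0..<n}"
    and s: "s permutes {0..<n}" and t: "t \<in> bidiagonal_matchings n g f"
    and i: "i < n" "s i \<noteq> t i" and s_diag: "f (s i) = g i"
    and minimal: "\<forall>j<n. s j \<noteq> t j \<longrightarrow> g i \<le> g j"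
  shows False
proof -
  have t_perm: "t permutes {0..<n}" using t unfolding bidiagonal_matchings_def by auto
  define j where "j = Hilbert_Choice.inv t (s i)"
  have tj: "t j = s i" unfolding j_def using permutes_inverses(1)[OF t_perm] by simp
  have j: "j < n" unfolding j_def
    using permutes_in_image[OF permutes_inv[OF t_perm]] permutes_in_image[OF s] i(1) by auto
  from t j have "f (t j) = g j \<or> f (t j) = Suc (g j)" unfolding bidiagonal_matchings_def by auto
  then have "g i = g j \<or> g i = Suc (g j)" unfolding tj s_diag by auto
  then show False
  proof
    assume "g i = g j"
    with g i j have "i = j" by (auto simp: inj_on_def)
    with tj i show False by auto
  next
    assume gi: "g i = Suc (g j)"
    with minimal j have "s j = t j" by force
    then have "j = i" using tj permutes_inj[OF s] by (auto simp: inj_def)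
    with gi show False by simp
  qed
qed

lemma bidiagonal_matching_unique:
  assumes g: "inj_on g {0..<n}" and f: "inj_on f {0..<n}"
    and s: "s \<in> bidiagonal_matchings n g f" and t: "t \<in> bidiagonal_matchings n g f"
  shows "s = t"
proof (rule ccontr)
  have s_perm: "s permutes {0..<n}" and t_perm: "t permutes {0..<n}"
    using s t unfolding bidiagonal_matchings_def by auto
  assume "s \<noteq> t"
  then obtain i0 where "i0 < n \<and> s i0 \<noteq> t i0"
    using permutes_not_in[OF s_perm] permutes_not_in[OF t_perm] by (metis ext not_le atLeastLessThan_iff)
  from ex_has_least_nat[of "\<lambda>i. i < n \<and> s i \<noteq> t i", OF this, of g]
  obtain i where i: "i < n" "s i \<noteq> t i" and minimal: "\<forall>j<n. s j \<noteq> t j \<longrightarrow> g i \<le> g j"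
    by auto
  have "s i < n" "t i < n" using permutes_in_image[OF s_perm] permutes_in_image[OF t_perm] i(1) by auto
  then have "f (s i) \<noteq> f (t i)" using inj_onD[OF f] i(2) by auto
  then consider "f (s i) = g i" | "f (t i) = g i"
    using s t i(1) unfolding bidiagonal_matchings_def by force
  then show False
  proof cases
    case 1
    show False by (rule bidiagonal_matching_unique_aux[OF g s_perm t i 1 minimal])
  next
    case 2
    show False by (rule bidiagonal_matching_unique_aux[OF g t_perm s i(1) _ 2])
      (use i(2) minimal in auto)
  qed
qed

lemma det_minor_non_inj:
  assumes "\<not> (inj_on g {0..<n} \<and> inj_on f {0..<n})"
  shows "det (minor n Y g f) = 0"
proof (cases "inj_on g {0..<n}")
  case False
  then obtain i j where ij: "i \<noteq> j" "i < n" "j < n" "g i = g j" unfolding inj_on_def by auto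
  show ?thesis by (rule det_identical_rows[OF minor_carrier ij(1-3)]) (use ij in \<open>auto simp: minor_def\<close>)
next
  case True
  with assms obtain i j where ij: "i \<noteq> j" "i < n" "j < n" "f i = f j"
    unfolding inj_on_def by auto
  show ?thesis by (rule det_identical_columns[OF minor_carrier ij(1-3)]) (use ij in \<open>auto simp: minor_def\<close>)
qed

lemma det_bidiagonal_minor:
  assumes bidiag: "bidiagonal m p Y" and g: "g \<in> index_maps n m" and f: "f \<in> index_maps n p"
  shows "det (minor n Y g f) =
    (\<Sum>s\<in>bidiagonal_matchings n g f. signof s * (\<Prod>i=0..<n. Y $$ (g i, f (s i))))"
proof -
  let ?P = "{s. s permutes {0..<n}}"
  let ?term = "\<lambda>s. signof s * (\<Prod>i=0..<n. Y $$ (g i, f (s i)))"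
  have s_lt: "s i < n" if "s \<in> ?P" "i < n" for s i using permutes_in_image that by auto
  have finP: "finite ?P" by (rule finite_permutations, auto)
  have "det (minor n Y g f) = sum ?term ?P"
    unfolding det_def'[of "minor n Y g f" n, OF minor_carrier]
    by (intro sum.cong refl arg_cong2[where f = "(*)"] prod.cong) (auto simp: minor_def s_lt)
  also have "\<dots> = sum ?term (bidiagonal_matchings n g f)"
  proof (rule sum.mono_neutral_right[OF finP])
    show "bidiagonal_matchings n g f \<subseteq> ?P" unfolding bidiagonal_matchings_def by auto
    show "\<forall>s\<in>?P - bidiagonal_matchings n g f. ?term s = 0"
    proof
      fix s assume "s \<in> ?P - bidiagonal_matchings n g f"
      then obtain i where s: "s \<in> ?P" and i: "i < n" "f (s i) \<noteq> g i" "f (s i) \<noteq> Suc (g i)"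
        unfolding bidiagonal_matchings_def by auto
      have "Y $$ (g i, f (s i)) = 0"
        using bidiag i s_lt[OF s i(1)] index_maps_lt[OF g i(1)] index_maps_lt[OF f, of "s i"]
        unfolding bidiagonal_def by auto
      then have "(\<Prod>i=0..<n. Y $$ (g i, f (s i))) = 0" using i by (intro prod_zero) auto
      then show "?term s = 0" by simp
    qed
  qed
  finally show ?thesis .
qed

text \<open>Each maximal minor of a bidiagonal matrix with entries bounded by \<open>R\<close> consists of at
  most one term of modulus at most \<open>R^n\<close>.\<close>
lemma bidiagonal_minor_le:
  fixes Y :: "complex mat"
  assumes bidiag: "bidiagonal m p Y" and R: "0 \<le> R"
    and bound: "\<And>r c. r < m \<Longrightarrow> c < p \<Longrightarrow> cmod (Y $$ (r, c)) \<le> R"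
    and g: "g \<in> index_maps n m" and f: "f \<in> index_maps n p"
    and inj: "inj_on g {0..<n}" "inj_on f {0..<n}"
  shows "cmod (det (minor n Y g f)) \<le> R ^ n"
proof -
  let ?V = "bidiagonal_matchings n g f"
  have "finite ?V" using finite_permutations[of "{0..<n}"] unfolding bidiagonal_matchings_def
    by (auto elim: rev_finite_subset)
  then have card_V: "card ?V \<le> 1"
    using card_le_Suc0_iff_eq bidiagonal_matching_unique[OF inj] by auto
  have "cmod (signof s * (\<Prod>i=0..<n. Y $$ (g i, f (s i)))) \<le> R ^ n" if "s \<in> ?V" for s
  proof -
    have "\<And>i. i < n \<Longrightarrow> s i < n"
      using that permutes_in_image unfolding bidiagonal_matchings_def by fastforce
    then have "(\<Prod>i=0..<n. cmod (Y $$ (g i, f (s i)))) \<le> (\<Prod>i=0..<n. R)"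
      using bound index_maps_lt[OF g] index_maps_lt[OF f] by (intro prod_mono) auto
    then show ?thesis by (simp add: norm_mult prod_norm sign_def)
  qed
  then have "cmod (det (minor n Y g f)) \<le> (\<Sum>s\<in>?V. R ^ n)"
    unfolding det_bidiagonal_minor[OF bidiag g f] by (intro order.trans[OF norm_sum] sum_mono)
  also have "\<dots> = card ?V * R ^ n" by simp
  also have "\<dots> \<le> R ^ n"
    using mult_right_mono[of "real (card ?V)" 1 "R ^ n"] card_V R by simp
  finally show ?thesis .
qed

lemma prod_diff_eq_fact_binomial: "(\<Prod>i\<in>{0..<n}. (p::nat) - i) = fact n * (p choose n)"
proof (induction n arbitrary: p)
  case 0 then show ?case by simp
next
  case (Suc n)
  have "(\<Prod>i\<in>{0..<Suc n}. p - i) = p * (\<Prod>i\<in>{0..<n}. p - Suc i)"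
    using prod.atLeast0_lessThan_Suc_shift[of "\<lambda>i. p - i" n] by simp
  also have "(\<Prod>i\<in>{0..<n}. p - Suc i) = (\<Prod>i\<in>{0..<n}. (p - 1) - i)"
    by (intro prod.cong refl) simp
  also have "\<dots> = fact n * ((p - 1) choose n)" by (rule Suc.IH)
  also have "p * (fact n * ((p - 1) choose n)) = fact (Suc n) * (p choose Suc n)"
  proof (cases p)
    case (Suc q)
    then show ?thesis using Suc_times_binomial_eq[of q n] by (simp add: algebra_simps)
  qed simp
  finally show ?case .
qed

lemma card_inj_index_maps: "card {f\<in>index_maps n m. inj_on f {0..<n}} = fact n * (m choose n)"
proof -
  let ?E = "{f \<in> {0..<n} \<rightarrow>\<^sub>E {0..<m}. inj_on f {0..<n}}"
  have "bij_betw (\<lambda>f. restrict f {0..<n}) {f\<in>index_maps n m. inj_on f {0..<n}} ?E"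
  proof (rule bij_betwI[where g = "\<lambda>f i. if i < n then f i else i"])
    show "(\<lambda>f. restrict f {0..<n}) \<in> {f\<in>index_maps n m. inj_on f {0..<n}} \<rightarrow> ?E"
      "(\<lambda>f i. if i < n then f i else i) \<in> ?E \<rightarrow> {f\<in>index_maps n m. inj_on f {0..<n}}"
      unfolding index_maps_def by (auto simp: inj_on_def)
    show "(\<lambda>i. if i < n then restrict f {0..<n} i else i) = f"
      if "f \<in> {f\<in>index_maps n m. inj_on f {0..<n}}" for f
      using that unfolding index_maps_def by auto
    show "restrict (\<lambda>i. if i < n then f i else i) {0..<n} = f" if "f \<in> ?E" for f
      using that by (auto simp: PiE_def extensional_def)
  qed
  then have "card {f\<in>index_maps n m. inj_on f {0..<n}} = card ?E"
    by (rule bij_betw_same_card)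
  also have "\<dots> = (\<Prod>i\<in>{0..<n}. m - i)"
    by (subst card_inj_on_subset_funcset, auto)
  finally show ?thesis unfolding prod_diff_eq_fact_binomial .
qed

text \<open>Total squared-minor mass of a bidiagonal \<open>m \<times> p\<close> matrix with entries bounded by \<open>R\<close>:
  only pairs of injective index maps contribute, each at most \<open>R ^ (2 n)\<close>.\<close>
lemma bidiagonal_minor_mass_le:
  fixes Y :: "complex mat"
  assumes bidiag: "bidiagonal m p Y" and R: "0 \<le> R"
    and bound: "\<And>r c. r < m \<Longrightarrow> c < p \<Longrightarrow> cmod (Y $$ (r, c)) \<le> R"
  shows "(\<Sum>f\<in>index_maps n p. \<Sum>g\<in>index_maps n m. (cmod (det (minor n Y g f)))\<^sup>2)
    \<le> R ^ (2 * n) * (fact n * (p choose n)) * (fact n * (m choose n))"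
proof -
  let ?inj = "\<lambda>f. inj_on f {0..<n}"
  let ?c = "R ^ (2 * n)"
  have "(cmod (det (minor n Y g f)))\<^sup>2 \<le> (if ?inj f then 1 else 0) * (if ?inj g then ?c else 0)"
    if f: "f \<in> index_maps n p" and g: "g \<in> index_maps n m" for f g
  proof (cases "?inj g \<and> ?inj f")
    case True
    then have "cmod (det (minor n Y g f)) \<le> R ^ n"
      using bidiagonal_minor_le[OF bidiag R bound g f] by blast
    then have "(cmod (det (minor n Y g f)))\<^sup>2 \<le> (R ^ n)\<^sup>2" by (intro power_mono) auto
    then show ?thesis using True by (simp add: power_even_eq)
  qed (simp add: det_minor_non_inj)
  then have "(\<Sum>f\<in>index_maps n p. \<Sum>g\<in>index_maps n m. (cmod (det (minor n Y g f)))\<^sup>2)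
      \<le> (\<Sum>f\<in>index_maps n p. if ?inj f then 1 else 0) * (\<Sum>g\<in>index_maps n m. if ?inj g then ?c else 0)"
    unfolding sum_product by (intro sum_mono) auto
  also have "\<dots> = (\<Sum>f\<in>{f\<in>index_maps n p. ?inj f}. 1) * (\<Sum>g\<in>{g\<in>index_maps n m. ?inj g}. ?c)"
    by (simp only: sum.inter_filter[OF finite_index_maps])
  finally show ?thesis by (simp add: card_inj_index_maps mult_ac)
qed

section \<open>Convolution matrices\<close>

text \<open>The \<open>n \<times> (n + deg P)\<close> matrix whose \<open>i\<close>-th row holds the coefficients of \<open>x^i P\<close>; its
  rows for \<open>P = B\<close> are the vectors \<open>B_1, ..., B_l\<close> of the theorem.\<close>
definition conv_mat :: "nat \<Rightarrow> 'a::comm_semiring_1 poly \<Rightarrow> 'a mat" where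
  "conv_mat n P = mat n (n + degree P) (\<lambda>(i, j). if i \<le> j then coeff P (j - i) else 0)"

lemma conv_mat_carrier: "conv_mat n P \<in> carrier_mat n (n + degree P)"
  unfolding conv_mat_def by auto

lemma coeff_mult_window:
  assumes "i \<le> (j::nat)"
  shows "(\<Sum>k\<in>{i..j}. coeff P (k - i) * coeff Q (j - k)) = coeff (P * Q) (j - i)"
proof -
  have "{i..j} = {0 + i..(j - i) + i}" using assms by auto
  then have "(\<Sum>k\<in>{i..j}. coeff P (k - i) * coeff Q (j - k)) =
      (\<Sum>a\<in>{0..j - i}. coeff P (a + i - i) * coeff Q (j - (a + i)))"
    by (simp only: sum.shift_bounds_cl_nat_ivl)
  also have "\<dots> = (\<Sum>a\<in>{0..j - i}. coeff P a * coeff Q (j - i - a))"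
    by (simp add: diff_diff_add add.commute)
  also have "\<dots> = coeff (P * Q) (j - i)" by (simp add: coeff_mult atLeast0AtMost)
  finally show ?thesis .
qed

lemma conv_mat_mult:
  fixes P Q :: "'a::idom poly"
  assumes P: "P \<noteq> 0" and Q: "Q \<noteq> 0"
  shows "conv_mat n (P * Q) = conv_mat n P * conv_mat (n + degree P) Q"
proof (rule eq_matI)
  let ?N = "n + degree P"
  have deg: "degree (P * Q) = degree P + degree Q" using degree_mult_eq[OF P Q] .
  fix i j assume "i < dim_row (conv_mat n P * conv_mat ?N Q)" "j < dim_col (conv_mat n P * conv_mat ?N Q)"
  then have i: "i < n" and j: "j < ?N + degree Q" by (auto simp: conv_mat_def)
  let ?h = "\<lambda>k. (if i \<le> k then coeff P (k - i) else 0) * (if k \<le> j then coeff Q (j - k) else 0)"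
  have "(conv_mat n P * conv_mat ?N Q) $$ (i, j) = (\<Sum>k\<in>{0..<?N}. ?h k)"
    using i j by (simp add: conv_mat_def scalar_prod_def)
  also have "\<dots> = (\<Sum>k\<in>{0..<?N + j + 1}. ?h k)"
    using i by (intro sum.mono_neutral_left) (auto simp: coeff_eq_0)
  also have "\<dots> = (\<Sum>k\<in>{i..j}. coeff P (k - i) * coeff Q (j - k))"
    by (rule sum.mono_neutral_cong_right) auto
  also have "\<dots> = conv_mat n (P * Q) $$ (i, j)"
    using i j coeff_mult_window[of i j P Q] by (auto simp: conv_mat_def deg)
  finally show "conv_mat n (P * Q) $$ (i, j) = (conv_mat n P * conv_mat ?N Q) $$ (i, j)" ..
qed (auto simp: conv_mat_def degree_mult_eq[OF P Q])

lemma conv_mat_linear_factor: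
  shows "bidiagonal N (N + 1) (conv_mat N [:-a, 1:])"
    and "\<And>r c. r < N \<Longrightarrow> c < N + 1 \<Longrightarrow> cmod (conv_mat N [:-a, 1:] $$ (r, c)) \<le> max 1 (cmod a)"
proof -
  have entry: "conv_mat N [:-a, 1:] $$ (r, c) = (if c = r then -a else if c = Suc r then 1 else 0)"
    if "r < N" "c < N + 1" for r c
    using that by (auto simp: conv_mat_def coeff_pCons split: nat.split)
  show "bidiagonal N (N + 1) (conv_mat N [:-a, 1:])"
    unfolding bidiagonal_def using entry by auto
  show "cmod (conv_mat N [:-a, 1:] $$ (r, c)) \<le> max 1 (cmod a)" if "r < N" "c < N + 1" for r c
    using entry[OF that] by auto
qed

section \<open>Peeling off linear factors\<close>

lemma minor_sq_sum_linear_factor: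
  fixes P :: "complex poly"
  assumes P: "P \<noteq> 0"
  shows "minor_sq_sum n (n + degree P + 1) (conv_mat n (P * [:-a, 1:]))
    \<le> minor_sq_sum n (n + degree P) (conv_mat n P) * max 1 (cmod a) ^ (2 * n)
       * ((n + degree P) choose n) * ((n + degree P + 1) choose n)"
proof -
  let ?N = "n + degree P" and ?R = "max 1 (cmod a)"
  let ?X = "conv_mat n P" and ?Y = "conv_mat ?N [:-a, 1:]"
  have X: "?X \<in> carrier_mat n ?N" by (rule conv_mat_carrier)
  have Y: "?Y \<in> carrier_mat ?N (?N + 1)" using conv_mat_carrier[of ?N "[:-a, 1:]"] by simp
  have mass: "(\<Sum>f\<in>index_maps n (?N + 1). \<Sum>g\<in>index_maps n ?N. (cmod (det (minor n ?Y g f)))\<^sup>2)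
      \<le> ?R ^ (2 * n) * (fact n * ((?N + 1) choose n)) * (fact n * (?N choose n))"
    by (rule bidiagonal_minor_mass_le[OF conv_mat_linear_factor(1) _ conv_mat_linear_factor(2)]) auto
  have "(fact n)\<^sup>2 * minor_sq_sum n (?N + 1) (conv_mat n (P * [:-a, 1:]))
      \<le> minor_sq_sum n ?N ?X *
        (\<Sum>f\<in>index_maps n (?N + 1). \<Sum>g\<in>index_maps n ?N. (cmod (det (minor n ?Y g f)))\<^sup>2)"
    using minor_sq_sum_mult_le[OF X Y] conv_mat_mult[OF P, of "[:-a, 1:]"] by simp
  also have "\<dots> \<le> minor_sq_sum n ?N ?X *
      (?R ^ (2 * n) * (fact n * ((?N + 1) choose n)) * (fact n * (?N choose n)))"
    by (rule mult_left_mono[OF mass minor_sq_sum_nonneg])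
  also have "\<dots> = (fact n)\<^sup>2 *
      (minor_sq_sum n ?N ?X * ?R ^ (2 * n) * (?N choose n) * ((?N + 1) choose n))"
    by (simp add: power2_eq_square algebra_simps)
  finally show ?thesis by (rule mult_left_le_imp_le) simp
qed

lemma minor_sq_sum_const: "minor_sq_sum n n (conv_mat n [:c:]) = fact n * cmod c ^ (2 * n)"
proof -
  have X: "conv_mat n [:c:] \<in> carrier_mat n n" using conv_mat_carrier[of n "[:c:]"] by simp
  have diag: "conv_mat n [:c:] = c \<cdot>\<^sub>m 1\<^sub>m n"
    by (rule eq_matI) (auto simp: conv_mat_def coeff_pCons split: nat.splits)
  have "conj_transpose (c \<cdot>\<^sub>m 1\<^sub>m n) = cnj c \<cdot>\<^sub>m 1\<^sub>m n"
    by (rule eq_matI) (auto simp: conj_transpose_def)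
  then have "conv_mat n [:c:] * conj_transpose (conv_mat n [:c:]) = c \<cdot>\<^sub>m (cnj c \<cdot>\<^sub>m 1\<^sub>m n)"
    unfolding diag by (subst mult_smult_assoc_mat) auto
  also have "\<dots> = (c * cnj c) \<cdot>\<^sub>m 1\<^sub>m n" by (rule eq_matI) auto
  finally have "conv_mat n [:c:] * conj_transpose (conv_mat n [:c:]) = (c * cnj c) \<cdot>\<^sub>m 1\<^sub>m n" .
  then have "complex_of_real (minor_sq_sum n n (conv_mat n [:c:])) = of_nat (fact n) * (c * cnj c) ^ n"
    unfolding gram_det_minor_sq_sum[OF X, symmetric] by simp
  also have "\<dots> = complex_of_real (fact n * cmod c ^ (2 * n))"
    unfolding complex_norm_square[symmetric] by (simp add: power_mult)
  finally show ?thesis by (simp only: of_real_eq_iff)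
qed

text \<open>The binomial factors collected in one step are absorbed by a polynomial in \<open>n\<close> whose
  degree grows quadratically with the number of factors.\<close>
lemma binomial_pair_le:
  fixes n k :: nat
  shows "((n + k) choose n) * ((n + k + 1) choose n) \<le> (n + k + 1) ^ (2 * k + 1)"
proof -
  have "(n + k) choose n \<le> (n + k + 1) ^ k"
    using binomial_symmetric[of n "n + k"] binomial_le_pow[of k "n + k"]
      power_mono[of "n + k" "n + k + 1" k] by simp
  moreover have "(n + k + 1) choose n \<le> (n + k + 1) ^ (k + 1)"
    using binomial_symmetric[of n "n + k + 1"] binomial_le_pow[of "k + 1" "n + k + 1"] by simp
  ultimately have "((n + k) choose n) * ((n + k + 1) choose n) \<le> (n + k + 1) ^ k * (n + k + 1) ^ (k + 1)"
    by (rule mult_le_mono)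
  also have "\<dots> = (n + k + 1) ^ (k + (k + 1))" by (rule power_add[symmetric])
  also have "k + (k + 1) = 2 * k + 1" by simp
  finally show ?thesis .
qed

lemma growth_factor_step:
  fixes n k :: nat
  shows "(n + k + 1) ^ (4 * k\<^sup>2) * (((n + k) choose n) * ((n + k + 1) choose n))
    \<le> (n + Suc k + 1) ^ (4 * (Suc k)\<^sup>2)"
proof -
  have "(n + k + 1) ^ (4 * k\<^sup>2) * (((n + k) choose n) * ((n + k + 1) choose n))
      \<le> (n + k + 1) ^ (4 * k\<^sup>2) * (n + k + 1) ^ (2 * k + 1)"
    by (rule mult_le_mono2[OF binomial_pair_le])
  also have "\<dots> = (n + k + 1) ^ (4 * k\<^sup>2 + (2 * k + 1))" by (rule power_add[symmetric])
  also have "\<dots> \<le> (n + k + 1) ^ (4 * (Suc k)\<^sup>2)"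
    by (rule power_increasing) (auto simp: power2_eq_square)
  also have "\<dots> \<le> (n + Suc k + 1) ^ (4 * (Suc k)\<^sup>2)" by (rule power_mono) auto
  finally show ?thesis .
qed

lemma minor_sq_sum_factored_le:
  assumes c: "c \<noteq> 0"
  shows "minor_sq_sum n (n + length as) (conv_mat n (smult c (\<Prod>a\<leftarrow>as. [:-a, 1:])))
    \<le> fact n * real (n + length as + 1) ^ (4 * (length as)\<^sup>2)
       * (cmod c * (\<Prod>a\<leftarrow>as. max 1 (cmod a))) ^ (2 * n)"
proof (induction as)
  case Nil
  then show ?case using minor_sq_sum_const[of n c] by (simp add: power_mult)
next
  case (Cons a as)
  let ?P = "smult c (\<Prod>a\<leftarrow>as. [:-a, 1:])" and ?k = "length as"
  let ?R = "max 1 (cmod a)" and ?mu = "cmod c * (\<Prod>a\<leftarrow>as. max 1 (cmod a))"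
  have deg: "degree ?P = ?k" using c degree_linear_factors[of "\<lambda>a. -a" as] by simp
  have P: "?P \<noteq> 0" using c by (auto simp: prod_list_zero_iff)
  have "smult c (\<Prod>a\<leftarrow>a # as. [:-a, 1:]) = ?P * [:-a, 1:]" by (simp add: mult.commute)
  then have "minor_sq_sum n (n + length (a # as)) (conv_mat n (smult c (\<Prod>a\<leftarrow>a # as. [:-a, 1:])))
      \<le> minor_sq_sum n (n + ?k) (conv_mat n ?P) * ?R ^ (2 * n) * ((n + ?k) choose n) * ((n + ?k + 1) choose n)"
    using minor_sq_sum_linear_factor[OF P, of n a] deg by simp
  also have "\<dots> \<le> (fact n * real (n + ?k + 1) ^ (4 * ?k\<^sup>2) * ?mu ^ (2 * n))
      * ?R ^ (2 * n) * ((n + ?k) choose n) * ((n + ?k + 1) choose n)"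
    by (intro mult_right_mono Cons.IH) auto
  also have "\<dots> = fact n * real ((n + ?k + 1) ^ (4 * ?k\<^sup>2) * (((n + ?k) choose n) * ((n + ?k + 1) choose n)))
      * (?mu * ?R) ^ (2 * n)"
    by (simp add: power_mult_distrib algebra_simps)
  also have "\<dots> \<le> fact n * real ((n + Suc ?k + 1) ^ (4 * (Suc ?k)\<^sup>2)) * (?mu * ?R) ^ (2 * n)"
    by (intro mult_right_mono mult_left_mono, unfold of_nat_le_iff, rule growth_factor_step) auto
  finally show ?case by (simp add: algebra_simps)
qed

text \<open>Complexified, the Gram matrix of \<open>B_1, ..., B_l\<close> is \<open>X X^*\<close> for the convolution matrix \<open>X\<close>
  of \<open>B\<close>; hence \<open>l! det (band_gram B l)\<close> is the squared-minor sum of \<open>X\<close>.\<close>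
lemma band_gram_minor_sq_sum:
  fixes B :: "real poly"
  shows "fact l * det (band_gram B l) =
    minor_sq_sum l (l + degree B) (conv_mat l (map_poly complex_of_real B))"
proof -
  let ?X = "conv_mat l (map_poly complex_of_real B)"
  have deg: "degree (map_poly complex_of_real B) = degree B" by (rule of_real_hom.degree_map_poly_hom)
  have X: "?X \<in> carrier_mat l (l + degree B)" using conv_mat_carrier[of l "map_poly complex_of_real B"] deg by simp
  have entry: "?X $$ (i, t) = complex_of_real (vec_index (band_row B l i) t)"
    if "i < l" "t < l + degree B" for i t
  proof -
    have "vec_index (band_row B l i) t = (if i \<le> t then coeff B (t - i) else 0)"
      unfolding band_row_def index_vec[OF that(2)] by (auto simp: coeff_eq_0)
    then show ?thesis using that deg by (simp add: conv_mat_def coeff_map_poly)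
  qed
  have gram: "map_mat complex_of_real (band_gram B l) = ?X * conj_transpose ?X"
  proof (rule eq_matI)
    fix i j assume "i < dim_row (?X * conj_transpose ?X)" "j < dim_col (?X * conj_transpose ?X)"
    then have i: "i < l" and j: "j < l" using X by (auto simp: conj_transpose_def)
    then show "map_mat complex_of_real (band_gram B l) $$ (i, j) = (?X * conj_transpose ?X) $$ (i, j)"
      using X by (simp add: band_gram_def conj_transpose_def scalar_prod_def entry band_row_def)
  qed (use X in \<open>auto simp: band_gram_def conj_transpose_def\<close>)
  have "complex_of_real (fact l * det (band_gram B l)) =
      of_nat (fact l) * det (map_mat complex_of_real (band_gram B l))"
    using of_real_hom.hom_det[of "band_gram B l"] by simp
  also have "\<dots> = complex_of_real (minor_sq_sum l (l + degree B) ?X)"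
    unfolding gram by (rule gram_det_minor_sq_sum[OF X])
  finally show ?thesis by (simp only: of_real_eq_iff)
qed

theorem band_gram_det_le:
  fixes B :: "real poly"
  assumes B: "B \<noteq> 0"
  shows "det (band_gram B l) \<le> real (l + degree B + 1) ^ (4 * (degree B)\<^sup>2)
    * mahler_measure_poly (map_poly complex_of_real B) ^ (2 * l)"
proof -
  let ?Bc = "map_poly complex_of_real B"
  let ?c = "lead_coeff ?Bc" and ?rs = "complex_roots_complex ?Bc"
  have deg: "degree ?Bc = degree B" by (rule of_real_hom.degree_map_poly_hom)
  have c: "?c \<noteq> 0" using B by simp
  have len: "length ?rs = degree B" using deg by simp
  have "fact l * det (band_gram B l) =
      minor_sq_sum l (l + length ?rs) (conv_mat l (smult ?c (\<Prod>a\<leftarrow>?rs. [:-a, 1:])))"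
    unfolding band_gram_minor_sq_sum complex_roots(1) len ..
  also have "\<dots> \<le> fact l * (real (l + degree B + 1) ^ (4 * (degree B)\<^sup>2)
      * mahler_measure_poly ?Bc ^ (2 * l))"
    using minor_sq_sum_factored_le[OF c, of l ?rs] by (simp add: len mahler_measure_poly_def)
  finally show ?thesis by (rule mult_left_le_imp_le) simp
qed

lemma poly_times_geometric_bounded:
  fixes q :: real
  assumes q0: "0 < q" and q1: "q < 1"
  shows "\<exists>K. \<forall>n. real (n + c) ^ e * q ^ n \<le> K"
proof (cases "e = 0")
  case True
  then show ?thesis using q0 q1 by (intro exI[of _ 1]) (auto intro: power_le_one)
next
  case False
  then have e: "0 < e" by simp
  define s where "s = root e q"
  have s0: "0 < s" and s1: "s < 1" unfolding s_def using e q0 q1 real_root_lt_1_iff[OF e] by auto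
  have se: "s ^ e = q" unfolding s_def by (rule real_root_pow_pos[OF e q0])
  have "(\<lambda>n. of_nat n * s ^ n + real c * s ^ n) \<longlonglongrightarrow> 0 + 0"
    using powser_times_n_limit_0[of s] LIMSEQ_power_zero[of s] s0 s1
    by (intro tendsto_add tendsto_mult_right_zero) auto
  then have "Bseq (\<lambda>n. real (n + c) * s ^ n)"
    by (intro convergent_imp_Bseq convergentI) (simp add: algebra_simps)
  then obtain K where K: "\<And>n. norm (real (n + c) * s ^ n) \<le> K" by (meson BseqD)
  have "real (n + c) ^ e * q ^ n \<le> K ^ e" for n
  proof -
    have "real (n + c) ^ e * q ^ n = (real (n + c) * s ^ n) ^ e"
      unfolding se[symmetric] by (simp add: power_mult_distrib power_mult[symmetric] mult.commute)
    also have "\<dots> \<le> K ^ e" using K[of n] s0 by (intro power_mono) auto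
    finally show ?thesis .
  qed
  then show ?thesis by blast
qed

theorem mainTheorem7:
  fixes B :: "real poly"
  assumes "degree B \<ge> 1" and "coeff B 0 \<noteq> 0"
  shows "\<forall>M :: real. M > (mahler_measure_poly (map_poly complex_of_real B))\<^sup>2 \<longrightarrow>
           (\<exists>K :: real. \<forall>l :: nat. l \<ge> 1 \<longrightarrow> det (band_gram B l) \<le> K * M ^ l)"
proof (intro allI impI)
  fix M :: real
  let ?mu = "mahler_measure_poly (map_poly complex_of_real B)" and ?d = "degree B"
  assume M: "M > ?mu\<^sup>2"
  have B: "B \<noteq> 0" using assms(1) by auto
  have "?mu > 0" unfolding mahler_measure_poly_via_monic
    using B mahler_measure_monic_ge_1[of "map_poly complex_of_real B"] by (intro mult_pos_pos) auto
  then have M0: "M > 0" using M zero_less_power[of ?mu 2] by linarith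
  define q where "q = ?mu\<^sup>2 / M"
  have "0 < q" "q < 1" unfolding q_def using \<open>?mu > 0\<close> M M0 by auto
  then obtain K where K: "\<And>l. real (l + (?d + 1)) ^ (4 * ?d\<^sup>2) * q ^ l \<le> K"
    using poly_times_geometric_bounded by blast
  have "det (band_gram B l) \<le> K * M ^ l" for l
  proof -
    have "det (band_gram B l) \<le> real (l + (?d + 1)) ^ (4 * ?d\<^sup>2) * q ^ l * M ^ l"
      using band_gram_det_le[OF B, of l] M0 by (simp add: q_def power_mult power_divide add.assoc)
    also have "\<dots> \<le> K * M ^ l" using K[of l] M0 by (intro mult_right_mono) auto
    finally show ?thesis .
  qed
  then show "\<exists>K. \<forall>l \<ge> 1. det (band_gram B l) \<le> K * M ^ l" by blast
qed

end
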